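(* Let $m\ge2$, $\ell,r_1,\dots,r_m\ge1$ be integers, $\ell\le k<m\ell$, $n=\sum_{i=1}^m(\ell+r_i)$, and let $$M^*=M(k-1;\ell+r_1,\dots,\ell+r_{m-1},\ell+r_m-1;\ell,\dots,\ell,\ell-1).$$ If $q$ is a prime power with $q>M^*$, then there exists an $[n,k,\ell;r_1,\dots,r_m]$-PMDS code over $\mathbb{F}_q$.
   Context: For positive integers $n_1,\dots,n_m$ with $n=\sum_i n_i$, nonnegative integers $f_1,\dots,f_m$ and an integer $k\ge0$, set $N_0=0$, $N_i=\sum_{j\le i}n_j$, $J_i=\{N_{i-1}+1,\dots,N_i\}$ for $i=1,\dots,m$, and let $M(k;n_1,\dots,n_m;f_1,\dots,f_m)$ be the number of subsets $I\subseteq\{1,\dots,n\}$ with $|I|=k$ and $|I\cap J_i|\le f_i$ for all $i$. An $[n,k]$-MDS code is a linear code of length $n$, dimension $k$, minimum Hamming distance $n-k+1$. PMDS codes: for positive integers $\ell,m,r_1,\dots,r_m$, $n=\sum_i(r_i+\ell)$, a linear code $C\subseteq\mathbb{F}^n$ of dimension $k<n$ with generator matrix $G=(B_1\mid\dots\mid B_m)$, $B_i\in\mathbb{F}^{k\times(r_i+\ell)}$, is an $[n,k,\ell;r_1,\dots,r_m]$-PMDS code if (i) each row space of $B_i$ is an $[r_i+\ell,\ell]$-MDS code, and (ii) for any choice of $r_i$ erased coordinates in block $i$ for every $i$, puncturing $C$ at them gives an $[m\ell,k]$-MDS code. *)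

theory Defs
  imports Complex_Main "HOL-Library.Function_Algebras"
begin

(* Vectors of length n over a field F are modelled as functions nat => F,
   coordinates indexed by a finite coordinate set S (here subsets of {1..n}),
   vanishing outside S. *)

definition sc :: "'a::field \<Rightarrow> (nat \<Rightarrow> 'a) \<Rightarrow> (nat \<Rightarrow> 'a)" where
  "sc c v = (\<lambda>j. c * v j)"

lemma vector_space_sc: "vector_space (sc :: 'a::field \<Rightarrow> _)"
  by unfold_locales (auto simp: sc_def fun_eq_iff algebra_simps)

definition code_dim :: "(nat \<Rightarrow> 'a::field) set \<Rightarrow> nat" where
  "code_dim C = vector_space.dim sc C"

definition lin_code :: "nat set \<Rightarrow> (nat \<Rightarrow> 'a::field) set \<Rightarrow> bool" where
  "lin_code S C \<longleftrightarrow> finite S \<and> module.subspace sc C \<and> (\<forall>c\<in>C. \<forall>j. j \<notin> S \<longrightarrow> c j = 0)"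

definition hdist :: "nat set \<Rightarrow> (nat \<Rightarrow> 'a) \<Rightarrow> (nat \<Rightarrow> 'a) \<Rightarrow> nat" where
  "hdist S x y = card {j\<in>S. x j \<noteq> y j}"

definition min_dist :: "nat set \<Rightarrow> (nat \<Rightarrow> 'a) set \<Rightarrow> nat" where
  "min_dist S C = Min {hdist S x y | x y. x \<in> C \<and> y \<in> C \<and> x \<noteq> y}"

definition is_MDS :: "nat set \<Rightarrow> nat \<Rightarrow> (nat \<Rightarrow> 'a::field) set \<Rightarrow> bool" where
  "is_MDS S k C \<longleftrightarrow> lin_code S C \<and> code_dim C = k \<and> min_dist S C = card S - k + 1"

(* row space of a k x n matrix G (rows 0..<k, columns 1..n) *)
definition gen_code :: "nat \<Rightarrow> nat \<Rightarrow> (nat \<Rightarrow> nat \<Rightarrow> 'a::field) \<Rightarrow> (nat \<Rightarrow> 'a) set" where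
  "gen_code n k G = {(\<lambda>j. if j \<in> {1..n} then (\<Sum>i<k. u i * G i j) else 0) | u. True}"

(* restriction of all codewords to coordinate set T; used both for the row
   space of a column block and for puncturing at the complement of T *)
definition restr_code :: "nat set \<Rightarrow> (nat \<Rightarrow> 'a::zero) set \<Rightarrow> (nat \<Rightarrow> 'a) set" where
  "restr_code T C = (\<lambda>c. (\<lambda>j. if j \<in> T then c j else 0)) ` C"

definition blk :: "(nat \<Rightarrow> nat) \<Rightarrow> nat \<Rightarrow> nat set" where
  "blk ns i = {(\<Sum>j\<in>{1..<i}. ns j) + 1 .. (\<Sum>j\<in>{1..i}. ns j)}"

definition M :: "nat \<Rightarrow> nat \<Rightarrow> (nat \<Rightarrow> nat) \<Rightarrow> (nat \<Rightarrow> nat) \<Rightarrow> nat" where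
  "M k m ns fs = card {I. I \<subseteq> {1..(\<Sum>i\<in>{1..m}. ns i)} \<and> card I = k \<and>
                        (\<forall>i\<in>{1..m}. card (I \<inter> blk ns i) \<le> fs i)}"

definition is_PMDS_gen :: "nat \<Rightarrow> nat \<Rightarrow> (nat \<Rightarrow> nat) \<Rightarrow> nat \<Rightarrow> (nat \<Rightarrow> nat \<Rightarrow> 'a::field) \<Rightarrow> bool" where
  "is_PMDS_gen m l r k G \<longleftrightarrow>
     (let n = (\<Sum>i\<in>{1..m}. r i + l); ns = (\<lambda>i. r i + l); C = gen_code n k G in
       k < n \<and> code_dim C = k \<and>
       (\<forall>i\<in>{1..m}. is_MDS (blk ns i) l (restr_code (blk ns i) C)) \<and>
       (\<forall>E. E \<subseteq> {1..n} \<and> (\<forall>i\<in>{1..m}. card (E \<inter> blk ns i) = r i) \<longrightarrow>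
            is_MDS ({1..n} - E) k (restr_code ({1..n} - E) C)))"

end

(* The generator matrix is built one column g_j in F_q^k at a time.  In every block the
   first l columns (the head of the block) are chosen generically and the remaining columns
   of the block are taken in the span of the head columns, so each block code has dimension
   l.  The invariant kept along the construction is that any at most k columns, at most l of
   them from each block, are linearly independent; this makes every block code and every
   code obtained by erasing r_i coordinates in each block MDS.

   A new column c of block i must avoid the span of the columns of each (k-1)-set T of
   already placed coordinates having at most l-1 coordinates in block i.  Each such span
   contains at most a 1/q fraction of the candidates, and the placement order (heads first,
   block m last, coordinate n at the very end) allows an injection of these sets T into the
   sets counted by M*.  Since q > M*, a suitable column always exists. *)
theory Submission
  imports Defs
begin

interpretation V: vector_space "sc :: 'a::field \<Rightarrow> (nat \<Rightarrow> 'a) \<Rightarrow> (nat \<Rightarrow> 'a)"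
  by (rule vector_space_sc)

lemma sc_apply: "sc c v j = c * v j"
  by (simp add: sc_def)

lemma sum_fun_apply: "(sum f A) j = (\<Sum>x\<in>A. f x j)"
  by (induction A rule: infinite_finite_induct) auto

lemma card_UNIV_field_gt_1: "1 < card (UNIV :: 'a::{field,finite} set)"
proof -
  have "card {0::'a, 1} \<le> card (UNIV::'a set)" by (rule card_mono) auto
  then show ?thesis by simp
qed

definition vecs_on :: "nat set \<Rightarrow> (nat \<Rightarrow> 'a::zero) set" where
  "vecs_on X = {v. \<forall>j. j \<notin> X \<longrightarrow> v j = 0}"

lemma subspace_vecs_on: "V.subspace (vecs_on X)"
  by (auto simp: V.subspace_def vecs_on_def sc_apply)

lemma card_vecs_on:
  assumes "finite X"
  shows "card (vecs_on X :: (nat \<Rightarrow> 'a::{zero,finite}) set) = card (UNIV::'a set) ^ card X"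
  using assms
proof (induction X rule: finite_induct)
  case empty
  have "vecs_on {} = {(0::nat\<Rightarrow>'a)}" by (auto simp: vecs_on_def fun_eq_iff)
  then show ?case by simp
next
  case (insert x X)
  have eq: "(vecs_on (insert x X) :: (nat \<Rightarrow> 'a) set) = (\<lambda>(v,t). v(x:=t)) ` (vecs_on X \<times> UNIV)"
  proof (rule set_eqI, rule iffI)
    fix w :: "nat \<Rightarrow> 'a" assume "w \<in> vecs_on (insert x X)"
    then have "w(x:=0) \<in> vecs_on X" by (auto simp: vecs_on_def)
    then show "w \<in> (\<lambda>(v,t). v(x:=t)) ` (vecs_on X \<times> UNIV)"
      by (intro rev_image_eqI[where x="(w(x:=0), w x)"]) auto
  qed (auto simp: vecs_on_def)
  have inj: "inj_on (\<lambda>(v,t). v(x:=t)) (vecs_on X \<times> (UNIV::'a set))"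
  proof (rule inj_onI, clarify)
    fix v t v' t' assume "v \<in> vecs_on X" "v' \<in> vecs_on X" "(v(x:=t) :: nat\<Rightarrow>'a) = v'(x:=t')"
    then show "v = v' \<and> t = t'" using insert(2) by (auto simp: vecs_on_def fun_eq_iff) metis+
  qed
  have "card (vecs_on (insert x X) :: (nat \<Rightarrow> 'a) set)
      = card ((vecs_on X :: (nat\<Rightarrow>'a) set) \<times> (UNIV::'a set))"
    using card_image[OF inj] eq by simp
  also have "\<dots> = card (UNIV::'a set) ^ card X * card (UNIV::'a set)"
    using insert by (simp add: card_cartesian_product)
  finally show ?case using insert by simp
qed

lemma finite_vecs_on:
  assumes "finite X" shows "finite (vecs_on X :: (nat \<Rightarrow> 'a::{zero,finite}) set)"
  using card_vecs_on[OF assms, where 'a='a] by (intro card_ge_0_finite) (simp add: finite_UNIV_card_ge_0)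

lemma card_span_insert:
  fixes B :: "(nat \<Rightarrow> 'a::{field,finite}) set"
  assumes b: "b \<notin> V.span B"
  shows "card (V.span (insert b B)) = card (V.span B) * card (UNIV::'a set)"
proof -
  have eq: "V.span (insert b B) = (\<lambda>(x,t). x + sc t b) ` (V.span B \<times> UNIV)"
  proof (rule set_eqI, rule iffI)
    fix y assume "y \<in> V.span (insert b B)"
    then obtain t where "y - sc t b \<in> V.span B" by (auto simp: V.span_insert)
    then show "y \<in> (\<lambda>(x,t). x + sc t b) ` (V.span B \<times> UNIV)"
      by (intro rev_image_eqI[where x="(y - sc t b, t)"]) auto
  next
    fix y assume "y \<in> (\<lambda>(x,t). x + sc t b) ` (V.span B \<times> UNIV)"
    then obtain x t where "x \<in> V.span B" "y = x + sc t b" by auto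
    then show "y \<in> V.span (insert b B)"
      by (meson V.span_add V.span_base V.span_mono V.span_scale insertI1 subset_insertI subsetD)
  qed
  have inj: "inj_on (\<lambda>(x,t). x + sc t b) (V.span B \<times> (UNIV::'a set))"
  proof (rule inj_onI, clarify)
    fix x t x' t' assume x: "x \<in> V.span B" "x' \<in> V.span B" and e: "x + sc t b = x' + sc t' b"
    show "x = x' \<and> t = t'"
    proof (cases "t = t'")
      case True with e show ?thesis by simp
    next
      case False
      have "sc (t - t') b = x' - x"
        using e by (simp add: fun_eq_iff sc_apply algebra_simps)
      then have "b = sc (inverse (t - t')) (x' - x)"
        using False by (metis V.scale_scale V.scale_one left_inverse right_minus_eq)
      moreover have "sc (inverse (t - t')) (x' - x) \<in> V.span B"
        using x by (intro V.span_scale V.span_diff)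
      ultimately show ?thesis using b by simp
    qed
  qed
  show ?thesis using card_image[OF inj] eq by (simp add: card_cartesian_product)
qed

lemma card_span:
  fixes B :: "(nat \<Rightarrow> 'a::{field,finite}) set"
  assumes "finite B" "V.independent B"
  shows "card (V.span B) = card (UNIV::'a set) ^ card B"
  using assms
proof (induction B rule: finite_induct)
  case (insert b B)
  then have "V.independent B" "b \<notin> V.span B" using V.independent_insert by metis+
  then show ?case using insert card_span_insert[of b B] by (simp add: mult.commute)
qed simp

lemma dim_eq_if_card:
  fixes C :: "(nat \<Rightarrow> 'a::{field,finite}) set"
  assumes "V.subspace C" "finite C" "card C = card (UNIV::'a set) ^ d"
  shows "V.dim C = d"
proof -
  obtain B where B: "B \<subseteq> C" "V.independent B" "C \<subseteq> V.span B" "card B = V.dim C"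
    using V.basis_exists by blast
  have "V.span B = C" using V.span_minimal[OF B(1) assms(1)] B(3) by blast
  moreover have "finite B" using B(1) assms(2) finite_subset by blast
  ultimately have "card (UNIV::'a set) ^ card B = card (UNIV::'a set) ^ d"
    using card_span B(2) assms(3) by metis
  then show ?thesis using B(4) card_UNIV_field_gt_1[where 'a='a] power_inject_exp by metis
qed

definition unit_vec :: "nat \<Rightarrow> nat \<Rightarrow> 'a::{zero,one}" where
  "unit_vec t = (\<lambda>i. if i = t then 1 else 0)"

lemma inj_unit_vec: "inj (unit_vec :: nat \<Rightarrow> nat \<Rightarrow> 'a::{zero_neq_one})"
  by (rule injI) (metis unit_vec_def zero_neq_one)

lemma independent_unit_vecs: "V.independent ((unit_vec :: nat \<Rightarrow> nat \<Rightarrow> 'a::field) ` {..<k})"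
proof (rule V.independent_if_scalars_zero)
  show "finite ((unit_vec :: nat \<Rightarrow> nat \<Rightarrow> 'a::field) ` {..<k})" by simp
  fix f :: "(nat \<Rightarrow> 'a) \<Rightarrow> 'a" and x :: "nat \<Rightarrow> 'a"
  assume sum: "(\<Sum>x\<in>(unit_vec :: nat \<Rightarrow> nat \<Rightarrow> 'a) ` {..<k}. sc (f x) x) = 0"
    and x: "x \<in> unit_vec ` {..<k}"
  then obtain t where t: "t < k" "x = unit_vec t" by auto
  have "0 = (\<Sum>x\<in>(unit_vec :: nat \<Rightarrow> nat \<Rightarrow> 'a) ` {..<k}. sc (f x) x) t" using sum by simp
  also have "\<dots> = (\<Sum>s<k. f (unit_vec s) * (unit_vec s :: nat \<Rightarrow> 'a) t)"
    by (simp add: sum_fun_apply sc_apply sum.reindex[OF inj_on_subset[OF inj_unit_vec subset_UNIV]])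
  also have "\<dots> = f (unit_vec t)" using t by (simp add: unit_vec_def if_distrib cong: if_cong)
  finally show "f x = 0" using t by simp
qed

definition indep_cols :: "(nat \<Rightarrow> nat \<Rightarrow> 'a::field) \<Rightarrow> nat set \<Rightarrow> bool" where
  "indep_cols g I \<longleftrightarrow> V.independent (g ` I) \<and> inj_on g I"

lemma vecs_on_subset_if_unit_vecs:
  fixes S :: "(nat \<Rightarrow> 'a::field) set"
  assumes X: "finite X" and S: "V.subspace S" and unit: "\<And>t. t \<in> X \<Longrightarrow> unit_vec t \<in> S"
  shows "vecs_on X \<subseteq> S"
  using X unit
proof (induction X rule: finite_induct)
  case empty
  have "vecs_on {} = {0::nat\<Rightarrow>'a}" by (auto simp: vecs_on_def fun_eq_iff)
  then show ?case using V.subspace_0[OF S] by simp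
next
  case (insert t X)
  show ?case
  proof
    fix v :: "nat \<Rightarrow> 'a" assume v: "v \<in> vecs_on (insert t X)"
    have "v(t:=0) \<in> vecs_on X" using v by (auto simp: vecs_on_def)
    then have "v(t:=0) \<in> S" using insert by auto
    moreover have "sc (v t) (unit_vec t) \<in> S" using insert.prems V.subspace_scale[OF S] by auto
    moreover have "v = v(t:=0) + sc (v t) (unit_vec t)" by (auto simp: fun_eq_iff unit_vec_def sc_apply)
    ultimately show "v \<in> S" using V.subspace_add[OF S] by metis
  qed
qed

lemma card_linear_preimage_span_le:
  fixes A :: "(nat \<Rightarrow> 'a::{field,finite}) \<Rightarrow> (nat \<Rightarrow> 'a)"
  assumes add: "\<And>x y. A (x + y) = A x + A y" and scale: "\<And>c x. A (sc c x) = sc c (A x)"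
    and X: "finite X" and w0: "w0 \<in> vecs_on X" "A w0 \<notin> V.span W"
  shows "card {w \<in> vecs_on X. A w \<in> V.span W} \<le> card (UNIV::'a set) ^ (card X - 1)"
proof -
  define S where "S = {w. A w \<in> V.span W}"
  have "A 0 = 0" using scale[of 0 0] by (simp add: sc_def zero_fun_def)
  then have S: "V.subspace S"
    unfolding S_def V.subspace_def using add scale V.span_add V.span_scale V.span_zero by auto
  (* S is a proper subspace, so it misses some unit vector; two of its elements that agree off
     that coordinate differ by a multiple of it, so forgetting the coordinate is injective. *)
  then obtain t where t: "t \<in> X" "unit_vec t \<notin> S"
    using vecs_on_subset_if_unit_vecs[OF X] w0 unfolding S_def by blast
  define B where "B = {w \<in> vecs_on X. A w \<in> V.span W}"
  have inj: "inj_on (\<lambda>w. w(t:=0)) B"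
  proof (rule inj_onI)
    fix w w' assume w: "w \<in> B" "w' \<in> B" and e: "w(t:=0) = w'(t:=0)"
    have "w + sc (-1) w' \<in> S" using w V.subspace_add[OF S] V.subspace_scale[OF S] unfolding B_def S_def by blast
    show "w = w'"
    proof (rule ccontr)
      assume "w \<noteq> w'"
      then have ne: "w t \<noteq> w' t" using e by (metis fun_upd_triv fun_upd_upd)
      have "unit_vec t = sc (inverse (w t - w' t)) (w + sc (-1) w')"
      proof
        fix j show "unit_vec t j = sc (inverse (w t - w' t)) (w + sc (-1) w') j"
          using fun_cong[OF e, of j] ne by (cases "j = t") (simp_all add: unit_vec_def sc_apply)
      qed
      then have "unit_vec t \<in> S" using \<open>w + sc (-1) w' \<in> S\<close> V.subspace_scale[OF S] by metis
      then show False using t by simp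
    qed
  qed
  have "(\<lambda>w. w(t:=0)) ` B \<subseteq> vecs_on (X - {t})" unfolding B_def vecs_on_def by auto
  then have "card ((\<lambda>w. w(t:=0)) ` B) \<le> card (vecs_on (X - {t}) :: (nat \<Rightarrow> 'a) set)"
    using X by (intro card_mono finite_vecs_on) simp
  also have "\<dots> = card (UNIV::'a set) ^ (card X - 1)" using t X by (simp add: card_vecs_on)
  finally show ?thesis using card_image[OF inj] unfolding B_def by simp
qed

lemma exists_outside_linear_preimages_of_spans:
  fixes A :: "(nat \<Rightarrow> 'a::{field,finite}) \<Rightarrow> (nat \<Rightarrow> 'a)" and W :: "'t \<Rightarrow> (nat \<Rightarrow> 'a) set"
  assumes add: "\<And>x y. A (x + y) = A x + A y" and scale: "\<And>c x. A (sc c x) = sc c (A x)"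
    and X: "finite X" "X \<noteq> {}" and fin: "finite F" and card_F: "card F < card (UNIV::'a set)"
    and proper: "\<And>T. T \<in> F \<Longrightarrow> \<exists>w0\<in>vecs_on X. A w0 \<notin> V.span (W T)"
  shows "\<exists>w\<in>vecs_on X. \<forall>T\<in>F. A w \<notin> V.span (W T)"
proof (rule ccontr)
  define bad where "bad T = {w \<in> vecs_on X. A w \<in> V.span (W T)}" for T
  define d where "d = card X"
  have d: "1 \<le> d" using X unfolding d_def by (simp add: Suc_leI card_gt_0_iff)
  assume "\<not> ?thesis"
  then have cover: "vecs_on X \<subseteq> (\<Union>T\<in>F. bad T)" unfolding bad_def by blast
  have card_bad: "card (bad T) \<le> card (UNIV::'a set) ^ (d - 1)" if "T \<in> F" for T
    using proper[OF that] card_linear_preimage_span_le[OF add scale X(1)] unfolding bad_def d_def by blast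
  have "card (vecs_on X :: (nat\<Rightarrow>'a) set) \<le> card (\<Union>T\<in>F. bad T)"
    using fin cover X(1) by (intro card_mono) (auto simp: bad_def finite_vecs_on)
  also have "\<dots> \<le> (\<Sum>T\<in>F. card (bad T))" by (rule card_UN_le[OF fin])
  also have "\<dots> \<le> card F * card (UNIV::'a set) ^ (d - 1)"
    using sum_mono[of F _ "\<lambda>_. card (UNIV::'a set) ^ (d - 1)", OF card_bad] by simp
  also have "\<dots> < card (UNIV::'a set) * card (UNIV::'a set) ^ (d - 1)"
    using card_F card_UNIV_field_gt_1[where 'a='a] by (intro mult_strict_right_mono) auto
  also have "\<dots> = card (UNIV::'a set) ^ d" using d by (cases d) auto
  finally show False using X(1) by (simp add: card_vecs_on d_def)
qed

definition restr :: "nat set \<Rightarrow> (nat \<Rightarrow> 'a::zero) \<Rightarrow> (nat \<Rightarrow> 'a)" where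
  "restr Z w = (\<lambda>j. if j \<in> Z then w j else 0)"

lemma hdist_ge_if_restr_inj:
  fixes C :: "(nat \<Rightarrow> 'a::field) set"
  assumes S: "finite S" and sub: "V.subspace C" and d: "d \<le> card S"
    and inj: "\<And>Z. Z \<subseteq> S \<Longrightarrow> card Z = d \<Longrightarrow> inj_on (restr Z) C"
    and xy: "x \<in> C" "y \<in> C" "x \<noteq> y"
  shows "card S - d + 1 \<le> hdist S x y"
proof -
  define zeros where "zeros = {j\<in>S. x j = y j}"
  have "card zeros < d"
  proof (rule ccontr)
    assume "\<not> card zeros < d"
    then obtain Z where Z: "Z \<subseteq> zeros" "card Z = d" by (meson not_less obtain_subset_with_card_n)
    then have "Z \<subseteq> S" "restr Z x = restr Z y" unfolding zeros_def restr_def by (auto simp: fun_eq_iff)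
    then show False using inj_onD[OF inj _ xy(1,2)] Z(2) xy(3) by blast
  qed
  moreover have "hdist S x y = card (S - zeros)" unfolding hdist_def zeros_def by (rule arg_cong[where f=card]) auto
  moreover have "card (S - zeros) = card S - card zeros" using S by (intro card_Diff_subset) (auto simp: zeros_def)
  ultimately show ?thesis using d by linarith
qed

lemma exists_codeword_hdist_le:
  fixes C :: "(nat \<Rightarrow> 'a::field) set"
  assumes S: "finite S" and sub: "V.subspace C" and Z: "Z \<subseteq> S" "card Z = d" and d: "1 \<le> d"
    and onto: "restr Z ` C = vecs_on Z"
  shows "\<exists>w\<in>C. w \<noteq> 0 \<and> hdist S w 0 \<le> card S - d + 1"
proof -
  obtain j0 where j0: "j0 \<in> Z" using Z(2) d by fastforce
  have "unit_vec j0 \<in> vecs_on Z" using j0 unfolding unit_vec_def vecs_on_def by auto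
  then obtain w where w: "w \<in> C" "restr Z w = unit_vec j0" using onto by (metis imageE)
  have w_j0: "w j0 = 1" using fun_cong[OF w(2), of j0] j0 unfolding restr_def unit_vec_def by simp
  have "w j = 0" if "j \<in> Z - {j0}" for j
    using fun_cong[OF w(2), of j] that unfolding restr_def unit_vec_def by auto
  then have "{j\<in>S. w j \<noteq> 0 j} \<subseteq> S - (Z - {j0})" by auto
  then have "hdist S w 0 \<le> card (S - (Z - {j0}))" unfolding hdist_def by (intro card_mono) (use S in auto)
  also have "\<dots> = card S - (d - 1)" using Z j0 S by (subst card_Diff_subset) (auto intro: finite_subset)
  finally show ?thesis using w(1) w_j0 d by (intro bexI[of _ w]) auto
qed

lemma is_MDS_if_restr_onto:
  fixes C :: "(nat \<Rightarrow> 'a::{field,finite}) set"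
  assumes S: "finite S" and C_S: "C \<subseteq> vecs_on S" and sub: "V.subspace C"
    and card_C: "card C = card (UNIV::'a set) ^ d" and d: "1 \<le> d" "d \<le> card S"
    and onto: "\<And>Z. Z \<subseteq> S \<Longrightarrow> card Z = d \<Longrightarrow> restr Z ` C = vecs_on Z"
  shows "is_MDS S d C"
proof -
  have fin_C: "finite C" using finite_subset[OF C_S finite_vecs_on[OF S]] .
  have inj: "inj_on (restr Z) C" if "Z \<subseteq> S" "card Z = d" for Z
  proof (rule eq_card_imp_inj_on[OF fin_C])
    have "finite Z" using that S finite_subset by blast
    then show "card (restr Z ` C) = card C" using onto[OF that] card_C card_vecs_on that(2) by metis
  qed
  obtain Z where Z: "Z \<subseteq> S" "card Z = d" using d(2) obtain_subset_with_card_n by metis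
  then obtain w where w: "w \<in> C" "w \<noteq> 0" "hdist S w 0 \<le> card S - d + 1"
    using exists_codeword_hdist_le[OF S sub Z d(1) onto[OF Z]] by blast
  have zero: "0 \<in> C" using V.subspace_0[OF sub] .
  have lower: "card S - d + 1 \<le> hdist S x y" if "x \<in> C" "y \<in> C" "x \<noteq> y" for x y
    using hdist_ge_if_restr_inj[OF S sub d(2) _ that] inj by blast
  define D where "D = {hdist S x y | x y. x \<in> C \<and> y \<in> C \<and> x \<noteq> y}"
  have "finite D"
    using finite_subset[of D "(\<lambda>(x,y). hdist S x y) ` (C \<times> C)"] fin_C unfolding D_def by auto
  then have "Min D = card S - d + 1"
  proof (rule Min_eqI)
    show "card S - d + 1 \<in> D"
      unfolding D_def using w zero lower[OF w(1) zero w(2)] by (intro CollectI exI[of _ w] exI[of _ 0]) auto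
  qed (use lower in \<open>auto simp: D_def\<close>)
  moreover have "lin_code S C" unfolding lin_code_def using S sub C_S by (auto simp: vecs_on_def)
  moreover have "code_dim C = d" unfolding code_dim_def using dim_eq_if_card[OF sub fin_C card_C] .
  ultimately show ?thesis unfolding is_MDS_def min_dist_def D_def by simp
qed

lemma sum_atLeastAtMost_eq_lessThan_plus:
  "1 \<le> (i::nat) \<Longrightarrow> (\<Sum>j\<in>{1..i}. f j) = (\<Sum>j\<in>{1..<i}. f j) + (f i :: nat)"
  by (metis Suc_le_lessD add.commute atLeastLessThanSuc_atLeastAtMost le_add_diff_inverse2
      plus_1_eq_Suc sum.atLeastLessThan_Suc)

lemma blk_eq:
  "1 \<le> i \<Longrightarrow> blk f i = {(\<Sum>j\<in>{1..<i}. f j) + 1 .. (\<Sum>j\<in>{1..<i}. f j) + f i}"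
  unfolding blk_def using sum_atLeastAtMost_eq_lessThan_plus[of i f] by simp

locale pmds_params =
  fixes m l k :: nat and r :: "nat \<Rightarrow> nat"
  assumes m_ge_2: "m \<ge> 2" and l_pos: "l \<ge> 1" and r_pos: "\<forall>i\<in>{1..m}. r i \<ge> 1"
    and l_le_k: "l \<le> k" and k_less_ml: "k < m * l"
begin

definition ns :: "nat \<Rightarrow> nat" where "ns i = r i + l"

definition offset :: "nat \<Rightarrow> nat" where "offset i = (\<Sum>j\<in>{1..<i}. ns j)"

definition J :: "nat \<Rightarrow> nat set" where "J i = blk ns i"

definition n :: nat where "n = (\<Sum>i\<in>{1..m}. ns i)"

definition head :: "nat \<Rightarrow> nat set" where "head i = {offset i + 1 .. offset i + l}"

definition admissible :: "(nat \<Rightarrow> nat) \<Rightarrow> nat set \<Rightarrow> bool" where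
  "admissible cap A \<longleftrightarrow> A \<subseteq> {1..n} \<and> (\<forall>i\<in>{1..m}. card (A \<inter> J i) \<le> cap i)"

definition cap_except :: "nat \<Rightarrow> nat \<Rightarrow> nat" where "cap_except i = (\<lambda>j. if j = i then l - 1 else l)"

lemma sum_ns_atMost: "1 \<le> i \<Longrightarrow> (\<Sum>j\<in>{1..i}. ns j) = offset i + ns i"
  unfolding offset_def by (simp add: atLeastLessThanSuc_atLeastAtMost[symmetric] sum.atLeastLessThan_Suc)

lemma offset_Suc: "1 \<le> i \<Longrightarrow> offset (Suc i) = offset i + ns i"
  using sum_ns_atMost unfolding offset_def by (simp add: atLeastLessThanSuc_atLeastAtMost)

lemma J_eq: "1 \<le> i \<Longrightarrow> J i = {offset i + 1 .. offset i + ns i}"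
  unfolding J_def blk_def using sum_ns_atMost by (simp add: offset_def)

lemma offset_mono: "a \<le> b \<Longrightarrow> offset a \<le> offset b"
  unfolding offset_def by (rule sum_mono2) auto

lemma offset_lt: "1 \<le> i \<Longrightarrow> i < i' \<Longrightarrow> offset i + ns i \<le> offset i'"
  using offset_Suc[of i] offset_mono[of "Suc i" i'] by simp

lemma J_disj: "i \<in> {1..m} \<Longrightarrow> i' \<in> {1..m} \<Longrightarrow> i \<noteq> i' \<Longrightarrow> J i \<inter> J i' = {}"
proof -
  assume a: "i \<in> {1..m}" "i' \<in> {1..m}" "i \<noteq> i'"
  have "J i \<inter> J i' = {}" if "i < i'" "1 \<le> i" "1 \<le> i'" for i i'
    using offset_lt[OF that(2,1)] J_eq[OF that(2)] J_eq[OF that(3)] by auto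
  note * = this
  show ?thesis
  proof (cases "i < i'")
    case True then show ?thesis using * a by auto
  next
    case False then have "i' < i" using a(3) by simp
    then have "J i' \<inter> J i = {}" using *[of i' i] a by auto
    then show ?thesis by (simp add: Int_commute)
  qed
qed

lemma J_unique: "i \<in> {1..m} \<Longrightarrow> i' \<in> {1..m} \<Longrightarrow> x \<in> J i \<Longrightarrow> x \<in> J i' \<Longrightarrow> i = i'"
  using J_disj by blast

lemma n_eq: "n = offset m + ns m"
  unfolding n_def using sum_ns_atMost[of m] m_ge_2 by simp

lemma union_J_atMost: "a \<le> m \<Longrightarrow> (\<Union>i\<in>{1..a}. J i) = {1..offset (Suc a)}"
proof (induction a)
  case 0 then show ?case by (simp add: offset_def)
next
  case (Suc a)
  have "{1..Suc a} = insert (Suc a) {1..a}" by auto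
  then have "(\<Union>i\<in>{1..Suc a}. J i) = J (Suc a) \<union> {1..offset (Suc a)}" using Suc by simp
  also have "\<dots> = {1..offset (Suc (Suc a))}"
  proof -
    have e1: "J (Suc a) = {offset (Suc a) + 1 .. offset (Suc a) + ns (Suc a)}" using J_eq[of "Suc a"] by simp
    have e2: "offset (Suc (Suc a)) = offset (Suc a) + ns (Suc a)" using offset_Suc[of "Suc a"] by simp
    show ?thesis unfolding e1 e2 by (rule set_eqI) (simp, linarith)
  qed
  finally show ?case .
qed

lemma union_J: "(\<Union>i\<in>{1..m}. J i) = {1..n}"
  using union_J_atMost[of m] offset_Suc[of m] n_eq m_ge_2 by simp

lemma J_subset: "i \<in> {1..m} \<Longrightarrow> J i \<subseteq> {1..n}"
  using union_J by auto

lemma card_J: "1 \<le> i \<Longrightarrow> card (J i) = ns i"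
  using J_eq by simp

lemma finite_J[simp]: "finite (J i)"
  unfolding J_def blk_def by simp

lemma card_eq_sum_blocks: "A \<subseteq> {1..n} \<Longrightarrow> card A = (\<Sum>i\<in>{1..m}. card (A \<inter> J i))"
proof -
  assume A: "A \<subseteq> {1..n}"
  then have "A = (\<Union>i\<in>{1..m}. A \<inter> J i)" using union_J by auto
  then have "card A = card (\<Union>i\<in>{1..m}. A \<inter> J i)" by simp
  also have "\<dots> = (\<Sum>i\<in>{1..m}. card (A \<inter> J i))"
  proof (rule card_UN_disjoint)
    show "\<forall>i\<in>{1..m}. \<forall>j\<in>{1..m}. i \<noteq> j \<longrightarrow> A \<inter> J i \<inter> (A \<inter> J j) = {}" using J_disj by blast
  qed auto
  finally show ?thesis .
qed

lemma exists_block: "j \<in> {1..n} \<Longrightarrow> \<exists>i\<in>{1..m}. j \<in> J i"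
  using union_J by auto

lemma head_subset_J: "1 \<le> i \<Longrightarrow> head i \<subseteq> J i"
  unfolding head_def using J_eq[of i] by (auto simp: ns_def)

lemma card_head: "card (head i) = l" unfolding head_def by simp

lemma finite_head[simp]: "finite (head i)" unfolding head_def by simp

lemma n_in_Jm: "n \<in> J m" using J_eq[of m] n_eq m_ge_2 l_pos by (auto simp: ns_def)

lemma r_m_pos: "r m \<ge> 1" using r_pos m_ge_2 by auto

lemma n_pos: "n \<ge> 1" using n_eq l_pos by (simp add: ns_def)

lemma n_notin_head: "i \<in> {1..m} \<Longrightarrow> n \<notin> head i"
proof
  assume i: "i \<in> {1..m}" and n: "n \<in> head i"
  then have "n \<in> J i" using head_subset_J by auto
  then have "i = m" using J_disj[OF i, of m] n_in_Jm m_ge_2 i by (cases "i = m") auto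
  then show False using n r_m_pos n_eq unfolding head_def ns_def by auto
qed

lemma ml_le_n: "m * l \<le> n"
proof -
  have "m * l = (\<Sum>i\<in>{1..m}. l)" by simp
  also have "\<dots> \<le> n" unfolding n_def ns_def by (rule sum_mono) simp
  finally show ?thesis .
qed

lemma admissible_subset: "admissible cap S \<Longrightarrow> T \<subseteq> S \<Longrightarrow> admissible cap T"
  unfolding admissible_def by (meson card_mono finite_Int finite_J le_trans inf_mono order_refl subset_trans)

lemma admissible_finite: "admissible cap S \<Longrightarrow> finite S"
  unfolding admissible_def using finite_subset by blast

lemma admissible_cap_except_iff:
  assumes i: "i \<in> {1..m}"
  shows "admissible (cap_except i) T \<longleftrightarrow> admissible (\<lambda>_. l) T \<and> card (T \<inter> J i) < l"
proof
  assume T: "admissible (cap_except i) T"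
  have "cap_except i i' \<le> l" for i' by (simp add: cap_except_def)
  then have "admissible (\<lambda>_. l) T" using T le_trans unfolding admissible_def by blast
  moreover have "card (T \<inter> J i) \<le> l - 1" using T i unfolding admissible_def cap_except_def by fastforce
  ultimately show "admissible (\<lambda>_. l) T \<and> card (T \<inter> J i) < l" using l_pos by simp
next
  assume "admissible (\<lambda>_. l) T \<and> card (T \<inter> J i) < l"
  then show "admissible (cap_except i) T" unfolding admissible_def cap_except_def by auto
qed

lemma admissible_insert_cap_except:
  assumes i: "i \<in> {1..m}" and T: "admissible (cap_except i) T" and x: "x \<in> J i"
  shows "admissible (\<lambda>_. l) (insert x T)"
  unfolding admissible_def
proof (intro conjI ballI)
  have fin: "finite T" using admissible_finite[OF T] .
  show "insert x T \<subseteq> {1..n}" using T x J_subset[OF i] unfolding admissible_def by auto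
  fix i' assume i': "i' \<in> {1..m}"
  show "card (insert x T \<inter> J i') \<le> l"
  proof (cases "i' = i")
    case True
    have "card (insert x T \<inter> J i) \<le> Suc (card (T \<inter> J i))"
      using fin x by (simp add: card_insert_if)
    then show ?thesis using True T unfolding admissible_cap_except_iff[OF i] by simp
  next
    case False
    then have "insert x T \<inter> J i' = T \<inter> J i'" using J_unique[OF i i'] x by auto
    then show ?thesis using admissible_cap_except_iff[OF i] T i' unfolding admissible_def by auto
  qed
qed

(* Admissible sets are the independent sets of a partition matroid; this is its exchange property. *)
lemma admissible_exchange:
  assumes T: "admissible cap T" and S: "admissible cap S" and lt: "card T < card S"
  shows "\<exists>x\<in>S - T. admissible cap (insert x T)"
proof -
  have TS: "T \<subseteq> {1..n}" "S \<subseteq> {1..n}" using T S unfolding admissible_def by auto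
  have "\<exists>i\<in>{1..m}. card (T \<inter> J i) < card (S \<inter> J i)"
  proof (rule ccontr)
    assume "\<not> ?thesis"
    then have "(\<Sum>i\<in>{1..m}. card (S \<inter> J i)) \<le> (\<Sum>i\<in>{1..m}. card (T \<inter> J i))"
      by (intro sum_mono) (simp add: not_less)
    then show False using card_eq_sum_blocks[OF TS(1)] card_eq_sum_blocks[OF TS(2)] lt by simp
  qed
  then obtain i where i: "i \<in> {1..m}" "card (T \<inter> J i) < card (S \<inter> J i)" by blast
  have "\<not> S \<inter> J i \<subseteq> T \<inter> J i"
  proof
    assume "S \<inter> J i \<subseteq> T \<inter> J i"
    then have "card (S \<inter> J i) \<le> card (T \<inter> J i)" by (intro card_mono) auto
    then show False using i by simp
  qed
  then obtain x where x: "x \<in> S" "x \<in> J i" "x \<notin> T" by blast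
  have finT: "finite T" using admissible_finite[OF T] .
  have "card (insert x T \<inter> J i') \<le> cap i'" if i': "i' \<in> {1..m}" for i'
  proof (cases "i' = i")
    case True
    have "insert x T \<inter> J i = insert x (T \<inter> J i)" using x by auto
    then have "card (insert x T \<inter> J i) = Suc (card (T \<inter> J i))" using x finT by simp
    also have "\<dots> \<le> card (S \<inter> J i)" using i by simp
    also have "\<dots> \<le> cap i" using S i unfolding admissible_def by auto
    finally show ?thesis using True by simp
  next
    case False
    then have "x \<notin> J i'" using J_unique[OF i(1) i', of x] x by blast
    then have "insert x T \<inter> J i' = T \<inter> J i'" by auto
    then show ?thesis using T i' unfolding admissible_def by auto
  qed
  then have "admissible cap (insert x T)" using TS x unfolding admissible_def by auto
  then show ?thesis using x by blast
qed

lemma admissible_augment: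
  assumes "admissible cap T" "admissible cap S" "card T \<le> card S"
  shows "\<exists>T'. T \<subseteq> T' \<and> admissible cap T' \<and> card T' = card S \<and> T' \<subseteq> T \<union> S"
proof -
  have "\<And>T. admissible cap T \<Longrightarrow> card T \<le> card S \<Longrightarrow> card S - card T = d \<Longrightarrow>
    \<exists>T'. T \<subseteq> T' \<and> admissible cap T' \<and> card T' = card S \<and> T' \<subseteq> T \<union> S" for d
  proof (induction d)
    case 0 then show ?case by auto
  next
    case (Suc d)
    then obtain x where x: "x \<in> S - T" "admissible cap (insert x T)"
      using admissible_exchange[OF Suc.prems(1) assms(2)] by fastforce
    have "card (insert x T) = Suc (card T)" using x admissible_finite[OF Suc.prems(1)] by simp
    then obtain T' where "insert x T \<subseteq> T'" "admissible cap T'" "card T' = card S"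
      "T' \<subseteq> insert x T \<union> S"
      using Suc.IH[OF x(2)] Suc.prems by fastforce
    then show ?case using x by blast
  qed
  then show ?thesis using assms by blast
qed

definition heads :: "nat set" where "heads = (\<Union>i\<in>{1..m}. head i)"

lemma heads_Int_J: "i \<in> {1..m} \<Longrightarrow> heads \<inter> J i = head i"
proof -
  assume i: "i \<in> {1..m}"
  have "head i' \<inter> J i = {}" if "i' \<in> {1..m}" "i' \<noteq> i" for i'
    using head_subset_J[of i'] J_disj[OF that(1) i that(2)] that(1) by auto
  note * = this
  show ?thesis
  proof
    show "heads \<inter> J i \<subseteq> head i"
    proof
      fix x assume "x \<in> heads \<inter> J i"
      then obtain i' where "i' \<in> {1..m}" "x \<in> head i'" "x \<in> J i" unfolding heads_def by auto
      then show "x \<in> head i" using * by (cases "i' = i") auto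
    qed
  qed (use head_subset_J[of i] i in \<open>auto simp: heads_def\<close>)
qed

lemma heads_subset: "heads \<subseteq> {1..n}" unfolding heads_def using head_subset_J J_subset by fastforce

lemma n_notin_heads: "n \<notin> heads" unfolding heads_def using n_notin_head by auto

lemma admissible_heads: "admissible (\<lambda>_. l) heads"
  unfolding admissible_def using heads_subset heads_Int_J card_head by simp

lemma card_heads: "card heads = m * l"
  using card_eq_sum_blocks[OF heads_subset] heads_Int_J card_head by simp

(* The columns at these k head coordinates are the unit vectors, which makes the code
   k-dimensional; the set also serves for completing admissible sets to size k. *)
definition info_set :: "nat set" where "info_set = (SOME S. S \<subseteq> heads \<and> card S = k)"

lemma info_set: "info_set \<subseteq> heads" "card info_set = k"
proof -
  have "\<exists>S. S \<subseteq> heads \<and> card S = k" using card_heads k_less_ml obtain_subset_with_card_n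
    by (metis less_imp_le_nat)
  then have "info_set \<subseteq> heads \<and> card info_set = k" unfolding info_set_def by (rule someI_ex)
  then show "info_set \<subseteq> heads" "card info_set = k" by auto
qed

lemma admissible_info_set: "admissible (\<lambda>_. l) info_set"
  using admissible_subset[OF admissible_heads info_set(1)] .

lemma finite_info_set: "finite info_set" using admissible_finite[OF admissible_info_set] .

lemma exists_admissible_info_set_minus:
  assumes i: "i \<in> {1..m}"
  shows "\<exists>x0\<in>info_set. admissible (cap_except i) (info_set - {x0}) \<and> card (info_set - {x0}) = k - 1"
proof -
  obtain x0 where x0: "x0 \<in> info_set" "card ((info_set - {x0}) \<inter> J i) < l"
  proof (cases "info_set \<inter> J i = {}")
    case True
    obtain x where x: "x \<in> info_set" using info_set(2) l_le_k l_pos by fastforce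
    have "(info_set - {x}) \<inter> J i = {}" using True by blast
    then show ?thesis using that[OF x] l_pos by simp
  next
    case False
    then obtain x where x: "x \<in> info_set" "x \<in> J i" by blast
    have "card (info_set \<inter> J i) \<le> l" using admissible_info_set i unfolding admissible_def by auto
    moreover have "(info_set - {x}) \<inter> J i = (info_set \<inter> J i) - {x}" by blast
    then have "card ((info_set - {x}) \<inter> J i) = card (info_set \<inter> J i) - 1"
      using x finite_info_set by simp
    moreover have "card (info_set \<inter> J i) > 0" using x finite_info_set by (auto simp: card_gt_0_iff)
    ultimately show ?thesis using that x by simp
  qed
  then show ?thesis
    using admissible_subset[OF admissible_info_set] finite_info_set info_set(2)
    by (intro bexI[of _ x0]) (auto simp: admissible_cap_except_iff[OF i])
qed

(* M* counts the admissible (k-1)-sets with at most l-1 coordinates in block m after deleting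
   coordinate n, the last coordinate of block m; Mstar_sets is this family in the original
   coordinates. *)
definition ns_star :: "nat \<Rightarrow> nat" where "ns_star = (\<lambda>i. if i = m then l + r i - 1 else l + r i)"
definition Mstar_sets :: "nat set set" where
  "Mstar_sets = {T. T \<subseteq> {1..n-1} \<and> card T = k - 1 \<and>
     (\<forall>i\<in>{1..m}. card (T \<inter> J i) \<le> cap_except m i)}"

lemma sum_ns_star_lessThan: "i \<le> m \<Longrightarrow> (\<Sum>j\<in>{1..<i}. ns_star j) = offset i"
  unfolding offset_def by (rule sum.cong) (auto simp: ns_star_def ns_def)

lemma blk_ns_star: "i \<in> {1..m} \<Longrightarrow> blk ns_star i = J i - {n}"
proof -
  assume i: "i \<in> {1..m}"
  then have b: "blk ns_star i = {offset i + 1 .. offset i + ns_star i}"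
    using blk_eq[of i ns_star] sum_ns_star_lessThan[of i] by simp
  show ?thesis
  proof (cases "i = m")
    case True
    then show ?thesis using b J_eq[of m] n_eq m_ge_2 r_m_pos by (auto simp: ns_star_def ns_def)
  next
    case False
    then have "n \<notin> J i" using J_unique[OF i, of m n] n_in_Jm m_ge_2 by auto
    then show ?thesis using b J_eq[of i] False i by (auto simp: ns_star_def ns_def)
  qed
qed

lemma sum_ns_star: "(\<Sum>j\<in>{1..m}. ns_star j) = n - 1"
  using sum_atLeastAtMost_eq_lessThan_plus[of m ns_star] sum_ns_star_lessThan[of m] n_eq m_ge_2 r_m_pos
  by (simp add: ns_star_def ns_def)

lemma M_star_eq_card_Mstar_sets: "M (k - 1) m ns_star (\<lambda>i. if i = m then l - 1 else l) = card Mstar_sets"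
proof -
  have "{I. I \<subseteq> {1..(\<Sum>i\<in>{1..m}. ns_star i)} \<and> card I = k - 1 \<and>
            (\<forall>i\<in>{1..m}. card (I \<inter> blk ns_star i) \<le> (if i = m then l - 1 else l))} = Mstar_sets"
    unfolding Mstar_sets_def
  proof (rule Collect_cong)
    fix I
    show "(I \<subseteq> {1..(\<Sum>i\<in>{1..m}. ns_star i)} \<and> card I = k - 1 \<and>
            (\<forall>i\<in>{1..m}. card (I \<inter> blk ns_star i) \<le> (if i = m then l - 1 else l))) =
          (I \<subseteq> {1..n-1} \<and> card I = k - 1 \<and> (\<forall>i\<in>{1..m}. card (I \<inter> J i) \<le> cap_except m i))"
    proof (cases "I \<subseteq> {1..n-1}")
      case True
      then have nI: "n \<notin> I" using n_pos by auto
      have "I \<inter> blk ns_star i = I \<inter> J i" if "i \<in> {1..m}" for i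
        using blk_ns_star[OF that] nI by auto
      then show ?thesis using True sum_ns_star n_pos by (auto simp: cap_except_def)
    qed (use sum_ns_star in auto)
  qed
  then show ?thesis unfolding M_def Mstar_sets_def by simp
qed

lemma finite_Mstar_sets: "finite Mstar_sets"
  by (rule finite_subset[of _ "Pow {1..n-1}"]) (auto simp: Mstar_sets_def)

(* A new column of block i has to avoid the span of the columns of every T in
   obstructions i P, where P is the set of coordinates already placed. *)
definition obstructions :: "nat \<Rightarrow> nat set \<Rightarrow> nat set set" where
  "obstructions i P = {T. T \<subseteq> P \<and> card T = k - 1 \<and> admissible (cap_except i) T}"

lemma finite_obstructions: "finite P \<Longrightarrow> finite (obstructions i P)"
  by (rule finite_subset[of _ "Pow P"]) (auto simp: obstructions_def)

lemma obstruction_in_Mstar_sets: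
  assumes T: "T \<in> obstructions i P" and P: "P \<subseteq> {1..n} - {n}" and Tm: "card (T \<inter> J m) \<le> l - 1"
  shows "T \<in> Mstar_sets"
proof -
  have adm: "\<forall>i'\<in>{1..m}. card (T \<inter> J i') \<le> cap_except i i'"
    using T unfolding obstructions_def admissible_def by auto
  have "card (T \<inter> J i') \<le> cap_except m i'" if "i' \<in> {1..m}" for i'
    using adm[rule_format, OF that] Tm by (cases "i' = m"; cases "i' = i") (auto simp: cap_except_def)
  then show ?thesis using T P n_pos unfolding obstructions_def Mstar_sets_def by auto
qed

lemma obstruction_Int_J_m_eq_head:
  assumes T: "T \<in> obstructions i P" and cond: "i = m \<or> P \<inter> J m \<subseteq> head m"
    and Tm: "\<not> card (T \<inter> J m) \<le> l - 1"
  shows "i \<noteq> m" "T \<inter> J m = head m"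
proof -
  have m: "m \<in> {1..m}" using m_ge_2 by simp
  have card_T: "\<forall>i'\<in>{1..m}. card (T \<inter> J i') \<le> cap_except i i'"
    using T unfolding obstructions_def admissible_def by auto
  show "i \<noteq> m" using card_T[rule_format, OF m] Tm by (auto simp: cap_except_def)
  then have sub: "T \<inter> J m \<subseteq> head m" using cond T unfolding obstructions_def by auto
  then have "card (T \<inter> J m) = card (head m)" using card_mono[OF finite_head sub] Tm card_head by simp
  then show "T \<inter> J m = head m" using card_subset_eq[OF finite_head sub] by simp
qed

lemma swapped_obstruction_in_Mstar_sets:
  assumes i: "i \<in> {1..m}" "i \<noteq> m" and c: "c \<in> J i" "c \<notin> T" and P: "P \<subseteq> {1..n} - {n}"
    and T: "T \<in> obstructions i P" "T \<inter> J m = head m"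
  shows "insert c (T - {offset m + 1}) \<in> Mstar_sets" (is "?T' \<in> _")
proof -
  have m: "m \<in> {1..m}" using m_ge_2 by simp
  have f0: "offset m + 1 \<in> T" using T(2) l_pos unfolding head_def by auto
  have fin: "finite T" and T_P: "T \<subseteq> P" and card_T: "card T = k - 1"
    and adm: "\<forall>i'\<in>{1..m}. card (T \<inter> J i') \<le> cap_except i i'"
    using T(1) P unfolding obstructions_def admissible_def by (auto intro: finite_subset)
  have c_J: "c \<notin> J i'" if "i' \<in> {1..m}" "i' \<noteq> i" for i'
    using J_unique[OF i(1) that(1)] c(1) that(2) by blast
  have "c \<noteq> n" "c \<in> {1..n}" using c_J[OF m] n_in_Jm i(2) c(1) J_subset[OF i(1)] by auto
  then have "?T' \<subseteq> {1..n-1}" using T_P P c(1) J_subset[OF i(1)] by auto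
  moreover have "card ?T' = k - 1" using c(2) fin card_T card_Suc_Diff1[OF fin f0] by simp
  moreover have "card (?T' \<inter> J i') \<le> cap_except m i'" if i': "i' \<in> {1..m}" for i'
  proof (cases "i' = m")
    case True
    have "?T' \<inter> J m = head m - {offset m + 1}" using T(2) c_J[OF m] i(2) by auto
    moreover have "offset m + 1 \<in> head m" using l_pos unfolding head_def by simp
    ultimately show ?thesis using True card_head by (simp add: cap_except_def)
  next
    case not_m: False
    show ?thesis
    proof (cases "i' = i")
      case True
      have "card (?T' \<inter> J i) \<le> card (insert c (T \<inter> J i))" by (intro card_mono) (auto simp: fin)
      also have "\<dots> \<le> Suc (card (T \<inter> J i))" using fin by (simp add: card_insert_if)
      finally show ?thesis using adm[rule_format, OF i(1)] True not_m l_pos by (simp add: cap_except_def)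
    next
      case False
      have "?T' \<inter> J i' \<subseteq> T \<inter> J i'" using c_J[OF i' False] by auto
      then have "card (?T' \<inter> J i') \<le> card (T \<inter> J i')" by (intro card_mono) (auto simp: fin)
      then show ?thesis using adm[rule_format, OF i'] False not_m by (simp add: cap_except_def)
    qed
  qed
  ultimately show ?thesis unfolding Mstar_sets_def by auto
qed

(* The placement order: the head of a block precedes the rest of the block, no coordinate of
   block m outside its head precedes a coordinate of another block, and n comes last. *)
definition placeable :: "nat \<Rightarrow> nat \<Rightarrow> nat set \<Rightarrow> bool" where
  "placeable i c P \<longleftrightarrow> i \<in> {1..m} \<and> c \<in> J i \<and> P \<subseteq> {1..n} - {c, n} \<and>
     (c \<notin> head i \<longrightarrow> head i \<subseteq> P) \<and> (i = m \<or> P \<inter> J m \<subseteq> head m)"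

lemma placeableI:
  assumes "i \<in> {1..m}" "c \<in> J i" "P \<subseteq> {1..n} - {c, n}" "head i \<subseteq> P \<or> c \<in> head i"
    and "i = m \<or> P \<inter> J m \<subseteq> head m"
  shows "placeable i c P"
  using assms unfolding placeable_def by blast

(* An obstruction with l coordinates in block m, not counted by M*, is mapped to a set counted
   by M* by exchanging the first coordinate of block m for c. *)
lemma card_obstructions_le:
  assumes "placeable i c P"
  shows "card (obstructions i P) \<le> card Mstar_sets"
proof -
  have i: "i \<in> {1..m}" and c: "c \<in> J i" and P: "P \<subseteq> {1..n} - {c, n}"
    and cond: "i = m \<or> P \<inter> J m \<subseteq> head m"
    using assms unfolding placeable_def by blast+
  define f where "f = offset m + 1"
  define h where "h T = (if card (T \<inter> J m) \<le> l - 1 then T else insert c (T - {f}))" for T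
  have P': "P \<subseteq> {1..n} - {n}" using P by blast
  have c_notin: "c \<notin> T" if "T \<in> obstructions i P" for T using that P unfolding obstructions_def by auto
  have into: "h T \<in> Mstar_sets" if T: "T \<in> obstructions i P" for T
  proof (cases "card (T \<inter> J m) \<le> l - 1")
    case True
    then show ?thesis using obstruction_in_Mstar_sets[OF T P'] unfolding h_def by simp
  next
    case False
    note full = obstruction_Int_J_m_eq_head[OF T cond False]
    show ?thesis
      using swapped_obstruction_in_Mstar_sets[OF i(1) full(1) c c_notin[OF T] P' T full(2)] False
      unfolding h_def f_def by simp
  qed
  define recover where "recover U = (if c \<in> U then insert f (U - {c}) else U)" for U
  have "recover (h T) = T" if T: "T \<in> obstructions i P" for T
  proof (cases "card (T \<inter> J m) \<le> l - 1")
    case False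
    then have "f \<in> T"
      using obstruction_Int_J_m_eq_head(2)[OF T cond False] l_pos unfolding head_def f_def by auto
    then show ?thesis using False c_notin[OF T] unfolding h_def recover_def by auto
  qed (use c_notin[OF T] in \<open>simp add: h_def recover_def\<close>)
  then have "inj_on h (obstructions i P)" by (rule inj_on_inverseI)
  then show ?thesis
    using card_image card_mono[OF finite_Mstar_sets, of "h ` obstructions i P"] into by fastforce
qed

(* The invariant of the column-by-column construction: P is the set of coordinates whose
   columns g j have already been chosen. *)
definition good :: "nat set \<Rightarrow> (nat \<Rightarrow> nat \<Rightarrow> 'a::field) \<Rightarrow> bool" where
  "good P g \<longleftrightarrow> P \<subseteq> {1..n} \<and> (\<forall>j\<in>P. g j \<in> vecs_on {..<k}) \<and>
     (\<forall>I. I \<subseteq> P \<longrightarrow> admissible (\<lambda>_. l) I \<longrightarrow> card I \<le> k \<longrightarrow> indep_cols g I) \<and>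
     (\<forall>i\<in>{1..m}. \<forall>j\<in>P \<inter> J i. j \<notin> head i \<longrightarrow> head i \<subseteq> P \<and> g j \<in> V.span (g ` head i)) \<and>
     info_set \<subseteq> P"

lemma goodD:
  assumes "good P g"
  shows "P \<subseteq> {1..n}" "\<And>j. j \<in> P \<Longrightarrow> g j \<in> vecs_on {..<k}"
    "\<And>I. I \<subseteq> P \<Longrightarrow> admissible (\<lambda>_. l) I \<Longrightarrow> card I \<le> k \<Longrightarrow> indep_cols g I"
    "\<And>i j. i \<in> {1..m} \<Longrightarrow> j \<in> P \<inter> J i \<Longrightarrow> j \<notin> head i \<Longrightarrow>
      head i \<subseteq> P \<and> g j \<in> V.span (g ` head i)"
    "info_set \<subseteq> P"
  using assms unfolding good_def by (elim conjE; simp)+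

lemma good_col_notin_span_obstruction:
  fixes g :: "nat \<Rightarrow> nat \<Rightarrow> 'a::field"
  assumes good: "good P g" and i: "i \<in> {1..m}" and T: "T \<in> obstructions i P"
    and x: "x \<in> P \<inter> J i" "x \<notin> T"
  shows "g x \<notin> V.span (g ` T)"
proof -
  have T_P: "T \<subseteq> P" and card_T: "card T = k - 1" and adm: "admissible (cap_except i) T"
    using T unfolding obstructions_def by auto
  have fin: "finite T" using admissible_finite[OF adm] .
  have "admissible (\<lambda>_. l) (insert x T)" using admissible_insert_cap_except[OF i adm] x(1) by simp
  moreover have "card (insert x T) \<le> k" using fin card_T x(2) l_le_k l_pos by simp
  ultimately have "indep_cols g (insert x T)" using goodD(3)[OF good] T_P x(1) by simp
  then show ?thesis using x(2) unfolding indep_cols_def by (simp add: V.independent_insert inj_on_insert)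
qed

lemma exists_column_avoiding_obstructions:
  fixes g :: "nat \<Rightarrow> nat \<Rightarrow> 'a::{field,finite}"
  assumes good: "good P g" and few: "card (obstructions i P) < card (UNIV::'a set)"
  shows "\<exists>v\<in>vecs_on {..<k}. \<forall>T\<in>obstructions i P. v \<notin> V.span (g ` T)"
proof -
  have info: "indep_cols g info_set"
    using goodD(3,5)[OF good] admissible_info_set info_set(2) by simp
  have proper: "\<exists>w0\<in>vecs_on {..<k}. id w0 \<notin> V.span (g ` T)" if T: "T \<in> obstructions i P" for T
  proof (rule ccontr)
    have card_T: "card T = k - 1" and fin: "finite T"
      using T admissible_finite unfolding obstructions_def by auto
    (* k independent columns cannot all lie in a span of k - 1 vectors *)
    assume "\<not> ?thesis"
    then have "g ` info_set \<subseteq> V.span (g ` T)" using goodD(2,5)[OF good] by auto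
    then have "card (g ` info_set) \<le> card (g ` T)"
      using V.independent_span_bound info fin unfolding indep_cols_def by blast
    moreover have "card (g ` info_set) = k" using info info_set(2) card_image unfolding indep_cols_def by metis
    moreover have "card (g ` T) \<le> k - 1" using card_image_le[OF fin, of g] card_T by simp
    ultimately show False using l_le_k l_pos by simp
  qed
  have "finite (obstructions i P)"
    using goodD(1)[OF good] by (intro finite_obstructions) (auto intro: finite_subset)
  moreover have "0 \<in> {..<k}" using l_le_k l_pos by simp
  then have "{..<k} \<noteq> {}" by blast
  ultimately show ?thesis
    using exists_outside_linear_preimages_of_spans[where A=id and W="\<lambda>T. g ` T",
        OF _ _ finite_lessThan _ _ few proper] by simp
qed

lemma exists_head_combination_avoiding_obstructions:
  fixes g :: "nat \<Rightarrow> nat \<Rightarrow> 'a::{field,finite}"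
  assumes good: "good P g" and i: "i \<in> {1..m}" and head: "head i \<subseteq> P"
    and few: "card (obstructions i P) < card (UNIV::'a set)"
  shows "\<exists>v\<in>V.span (g ` head i) \<inter> vecs_on {..<k}. \<forall>T\<in>obstructions i P. v \<notin> V.span (g ` T)"
proof -
  define A where "A w = (\<Sum>j\<in>head i. sc (w j) (g j))" for w :: "nat \<Rightarrow> 'a"
  have A_unit_vec: "A (unit_vec j) = g j" if "j \<in> head i" for j
  proof -
    have "sc (unit_vec j j') (g j') = (if j' = j then g j' else 0)" for j'
      by (auto simp: unit_vec_def sc_def fun_eq_iff)
    then show ?thesis using that unfolding A_def by simp
  qed
  have "\<exists>w\<in>vecs_on (head i). \<forall>T\<in>obstructions i P. A w \<notin> V.span (g ` T)"
  proof (rule exists_outside_linear_preimages_of_spans[OF _ _ finite_head _ _ few])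
    show "A (x + y) = A x + A y" for x y unfolding A_def by (simp add: V.scale_left_distrib sum.distrib)
    show "A (sc c x) = sc c (A x)" for c x
      unfolding A_def by (simp add: sc_apply V.scale_sum_right V.scale_scale)
    show "head i \<noteq> {}" using card_head[of i] l_pos by auto
    show "finite (obstructions i P)"
      using goodD(1)[OF good] by (intro finite_obstructions) (auto intro: finite_subset)
    fix T assume T: "T \<in> obstructions i P"
    have "card (T \<inter> J i) < card (head i)"
      using T card_head unfolding obstructions_def admissible_cap_except_iff[OF i] by simp
    moreover have "head i \<subseteq> T \<Longrightarrow> card (head i) \<le> card (T \<inter> J i)"
      using head_subset_J[of i] i by (intro card_mono) auto
    ultimately obtain x where x: "x \<in> head i" "x \<notin> T" by fastforce
    have "g x \<notin> V.span (g ` T)"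
      using good_col_notin_span_obstruction[OF good i T _ x(2)] x(1) head head_subset_J[of i] i by auto
    then show "\<exists>w0\<in>vecs_on (head i). A w0 \<notin> V.span (g ` T)"
      using A_unit_vec[OF x(1)] x(1) by (intro bexI[of _ "unit_vec x"]) (auto simp: vecs_on_def unit_vec_def)
  qed
  then obtain w where w: "\<forall>T\<in>obstructions i P. A w \<notin> V.span (g ` T)" by blast
  have "A w \<in> V.span (g ` head i)" unfolding A_def
    by (intro V.span_sum V.span_scale V.span_base) simp
  moreover have "A w \<in> vecs_on {..<k}" unfolding A_def
    using head goodD(2)[OF good]
    by (intro V.subspace_sum[OF subspace_vecs_on] V.subspace_scale[OF subspace_vecs_on]) auto
  ultimately show ?thesis using w by blast
qed

lemma exists_obstruction_superset:
  assumes i: "i \<in> {1..m}" and info: "info_set \<subseteq> P" and T0: "T0 \<subseteq> P"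
    "admissible (cap_except i) T0" "card T0 \<le> k - 1"
  shows "\<exists>T\<in>obstructions i P. T0 \<subseteq> T"
proof -
  obtain x0 where x0: "x0 \<in> info_set" "admissible (cap_except i) (info_set - {x0})"
    "card (info_set - {x0}) = k - 1"
    using exists_admissible_info_set_minus[OF i] by blast
  obtain T where "T0 \<subseteq> T" "admissible (cap_except i) T" "card T = k - 1"
    "T \<subseteq> T0 \<union> (info_set - {x0})"
    using admissible_augment[OF T0(2) x0(2)] T0(3) x0(3) by auto
  then show ?thesis using T0(1) info unfolding obstructions_def by blast
qed

lemma indep_cols_insert_column:
  fixes g :: "nat \<Rightarrow> nat \<Rightarrow> 'a::field"
  assumes good: "good P g" and i: "i \<in> {1..m}" and c: "c \<in> J i" "c \<notin> P"
    and v: "\<forall>T\<in>obstructions i P. v \<notin> V.span (g ` T)"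
    and I: "I \<subseteq> insert c P" "admissible (\<lambda>_. l) I" "card I \<le> k"
  shows "indep_cols (g(c := v)) I"
proof (cases "c \<in> I")
  case False
  then have "indep_cols g I" using goodD(3)[OF good] I by blast
  moreover have "g(c := v) ` I = g ` I" "inj_on (g(c := v)) I = inj_on g I"
    using False by (auto intro!: inj_on_cong)
  ultimately show ?thesis unfolding indep_cols_def by simp
next
  case True
  define T0 where "T0 = I - {c}"
  have fin: "finite I" using admissible_finite[OF I(2)] .
  have T0_P: "T0 \<subseteq> P" using I(1) unfolding T0_def by auto
  have card_T0: "card T0 \<le> k - 1" using True fin I(3) unfolding T0_def by simp
  have "card (T0 \<inter> J i) < card (I \<inter> J i)"
    using True c(1) fin unfolding T0_def by (intro psubset_card_mono) auto
  moreover have "card (I \<inter> J i) \<le> l" using I(2) i unfolding admissible_def by blast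
  ultimately have adm_T0: "admissible (cap_except i) T0"
    using admissible_subset[OF I(2), of T0] unfolding admissible_cap_except_iff[OF i] T0_def by auto
  obtain T where "T \<in> obstructions i P" "T0 \<subseteq> T"
    using exists_obstruction_superset[OF i goodD(5)[OF good] T0_P adm_T0 card_T0] by blast
  then have v_T0: "v \<notin> V.span (g ` T0)" using v V.span_mono[of "g ` T0" "g ` T"] by blast
  have ind_T0: "indep_cols g T0"
    using goodD(3)[OF good T0_P admissible_subset[OF I(2)]] card_T0 l_le_k l_pos unfolding T0_def by auto
  have c_T0: "c \<notin> T0" unfolding T0_def by simp
  have img: "g(c := v) ` I = insert v (g ` T0)" using True c_T0 unfolding T0_def by auto
  have inj_T0: "inj_on (g(c := v)) T0 = inj_on g T0" using c_T0 by (intro inj_on_cong) auto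
  have "v \<notin> g ` T0" using v_T0 V.span_superset by blast
  then have "inj_on (g(c := v)) I" using ind_T0 inj_T0 True c_T0 unfolding indep_cols_def T0_def
    by (auto simp: inj_on_insert[of _ c "I - {c}", simplified insert_Diff[OF True]])
  moreover have "V.independent (g(c := v) ` I)"
    using img V.independent_insertI[OF v_T0] ind_T0 unfolding indep_cols_def by simp
  ultimately show ?thesis unfolding indep_cols_def by simp
qed

lemma good_insert:
  fixes g :: "nat \<Rightarrow> nat \<Rightarrow> 'a::field"
  assumes good: "good P g" and i: "i \<in> {1..m}" and c: "c \<in> J i" "c \<notin> P"
    and v: "v \<in> vecs_on {..<k}" "\<forall>T\<in>obstructions i P. v \<notin> V.span (g ` T)"
    and tail: "c \<notin> head i \<Longrightarrow> head i \<subseteq> P \<and> v \<in> V.span (g ` head i)"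
  shows "good (insert c P) (g(c := v))"
proof -
  have tail': "head i' \<subseteq> insert c P \<and> (g(c := v)) j \<in> V.span (g(c := v) ` head i')"
    if i': "i' \<in> {1..m}" and j: "j \<in> insert c P \<inter> J i'" and j_head: "j \<notin> head i'" for i' j
  proof (cases "j = c")
    case True
    then have "i' = i" using J_unique[OF i i'] c j by blast
    moreover have "head i \<subseteq> P" "v \<in> V.span (g ` head i)" using tail True j_head \<open>i' = i\<close> by auto
    moreover have "g(c := v) ` head i = g ` head i" using \<open>head i \<subseteq> P\<close> c(2) by auto
    ultimately show ?thesis using True by auto
  next
    case False
    then have "head i' \<subseteq> P" "g j \<in> V.span (g ` head i')" using goodD(4)[OF good i' _ j_head] j by auto
    moreover have "g(c := v) ` head i' = g ` head i'" using \<open>head i' \<subseteq> P\<close> c(2) by auto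
    ultimately show ?thesis using False by auto
  qed
  have "insert c P \<subseteq> {1..n}" using goodD(1)[OF good] c J_subset[OF i] by auto
  moreover have "\<forall>j\<in>insert c P. (g(c := v)) j \<in> vecs_on {..<k}" using v goodD(2)[OF good] by auto
  moreover have "\<forall>I. I \<subseteq> insert c P \<longrightarrow> admissible (\<lambda>_. l) I \<longrightarrow> card I \<le> k \<longrightarrow> indep_cols (g(c := v)) I"
    using indep_cols_insert_column[OF good i c v(2)] by blast
  moreover have "\<forall>i'\<in>{1..m}. \<forall>j\<in>insert c P \<inter> J i'. j \<notin> head i' \<longrightarrow>
      head i' \<subseteq> insert c P \<and> (g(c := v)) j \<in> V.span (g(c := v) ` head i')"
    using tail' by blast
  moreover have "info_set \<subseteq> insert c P" using goodD(5)[OF good] by blast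
  ultimately show ?thesis unfolding good_def by (intro conjI)
qed

lemma good_extend:
  fixes g :: "nat \<Rightarrow> nat \<Rightarrow> 'a::{field,finite}"
  assumes q: "card Mstar_sets < card (UNIV::'a set)" and good: "good P g" and plc: "placeable i c P"
  shows "\<exists>v. good (insert c P) (g(c := v))"
proof -
  have i: "i \<in> {1..m}" and c: "c \<in> J i" "c \<notin> P" and tail: "c \<notin> head i \<Longrightarrow> head i \<subseteq> P"
    using plc unfolding placeable_def by blast+
  have few: "card (obstructions i P) < card (UNIV::'a set)"
    using card_obstructions_le[OF plc] q by linarith
  show ?thesis
  proof (cases "c \<in> head i")
    case True
    obtain v where "v \<in> vecs_on {..<k}" "\<forall>T\<in>obstructions i P. v \<notin> V.span (g ` T)"
      using exists_column_avoiding_obstructions[OF good few] by blast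
    then have "good (insert c P) (g(c := v))" using good_insert[OF good i c] True by blast
    then show ?thesis by blast
  next
    case False
    obtain v where "v \<in> V.span (g ` head i)" "v \<in> vecs_on {..<k}"
      "\<forall>T\<in>obstructions i P. v \<notin> V.span (g ` T)"
      using exists_head_combination_avoiding_obstructions[OF good i tail[OF False] few] by blast
    then have "good (insert c P) (g(c := v))" using good_insert[OF good i c] tail[OF False] by blast
    then show ?thesis by blast
  qed
qed

lemma exists_good_info_set: "\<exists>g :: nat \<Rightarrow> nat \<Rightarrow> 'a::{field,finite}. good info_set g"
proof -
  obtain h where h: "bij_betw h info_set {..<k}"
    using ex_bij_betw_finite_nat[OF finite_info_set] info_set(2) by (auto simp: atLeast0LessThan)
  define g where "g = (unit_vec \<circ> h :: nat \<Rightarrow> nat \<Rightarrow> 'a)"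
  have inj: "inj_on g info_set"
    unfolding g_def using comp_inj_on[OF bij_betw_imp_inj_on[OF h] inj_on_subset[OF inj_unit_vec]] by simp
  have img: "g ` info_set = unit_vec ` {..<k}"
    unfolding g_def image_comp[symmetric] bij_betw_imp_surj_on[OF h] ..
  have "info_set \<subseteq> {1..n}" using info_set(1) heads_subset by blast
  moreover have "\<forall>j\<in>info_set. g j \<in> vecs_on {..<k}"
  proof
    fix j assume "j \<in> info_set"
    then have "h j < k" using bij_betw_apply[OF h] by simp
    then show "g j \<in> vecs_on {..<k}" by (simp add: g_def vecs_on_def unit_vec_def)
  qed
  moreover have "\<forall>I. I \<subseteq> info_set \<longrightarrow> admissible (\<lambda>_. l) I \<longrightarrow> card I \<le> k \<longrightarrow> indep_cols g I"
  proof (intro allI impI)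
    fix I assume I: "I \<subseteq> info_set"
    then have "g ` I \<subseteq> unit_vec ` {..<k}" using img by blast
    then show "indep_cols g I"
      using V.independent_mono[OF independent_unit_vecs] inj_on_subset[OF inj I]
      unfolding indep_cols_def by blast
  qed
  moreover have "\<forall>i\<in>{1..m}. \<forall>j\<in>info_set \<inter> J i. j \<notin> head i \<longrightarrow>
      head i \<subseteq> info_set \<and> g j \<in> V.span (g ` head i)"
    using info_set(1) heads_Int_J by blast
  ultimately have "good info_set g" unfolding good_def by (intro conjI order_refl)
  then show ?thesis by blast
qed

lemma good_extend_set:
  fixes g0 :: "nat \<Rightarrow> nat \<Rightarrow> 'a::{field,finite}"
  assumes q: "card Mstar_sets < card (UNIV::'a set)" and F: "finite F" and good: "good P0 g0"
    and step: "\<And>c Q. c \<in> F \<Longrightarrow> Q \<subseteq> F \<Longrightarrow> c \<notin> Q \<Longrightarrow> \<exists>i. placeable i c (P0 \<union> Q)"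
  shows "\<exists>g :: nat \<Rightarrow> nat \<Rightarrow> 'a. good (P0 \<union> F) g"
  using F order_refl[of F]
proof (induction F rule: finite_subset_induct')
  case empty
  then show ?case using good by auto
next
  case (insert c Q)
  then obtain g :: "nat \<Rightarrow> nat \<Rightarrow> 'a" where g: "good (P0 \<union> Q) g" by blast
  obtain i where "placeable i c (P0 \<union> Q)" using step[OF insert(2,3,4)] by blast
  then obtain v where "good (insert c (P0 \<union> Q)) (g(c := v))" using good_extend[OF q g] by blast
  then show ?case by (metis Un_insert_right)
qed

lemma exists_good_heads:
  assumes q: "card Mstar_sets < card (UNIV::'a::{field,finite} set)"
  shows "\<exists>g :: nat \<Rightarrow> nat \<Rightarrow> 'a. good heads g"
proof -
  have m: "m \<in> {1..m}" using m_ge_2 by simp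
  obtain g0 :: "nat \<Rightarrow> nat \<Rightarrow> 'a" where g0: "good info_set g0" using exists_good_info_set by blast
  have "\<exists>g :: nat \<Rightarrow> nat \<Rightarrow> 'a. good (info_set \<union> (heads - info_set)) g"
  proof (rule good_extend_set[OF q _ g0])
    show "finite (heads - info_set)" using heads_subset finite_subset by blast
    fix c Q assume c: "c \<in> heads - info_set" and Q: "Q \<subseteq> heads - info_set" "c \<notin> Q"
    obtain i where i: "i \<in> {1..m}" "c \<in> head i" using c unfolding heads_def by blast
    have P: "info_set \<union> Q \<subseteq> heads" using info_set(1) Q(1) by blast
    have "c \<in> J i" using i head_subset_J[of i] by auto
    moreover have "info_set \<union> Q \<subseteq> {1..n} - {c, n}" using c Q(2) P heads_subset n_notin_heads by blast
    moreover have "(info_set \<union> Q) \<inter> J m \<subseteq> head m" using P heads_Int_J[OF m] by blast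
    ultimately show "\<exists>i. placeable i c (info_set \<union> Q)"
      using placeableI[OF i(1) _ _ disjI2[OF i(2)] disjI2] by blast
  qed
  moreover have "info_set \<union> (heads - info_set) = heads" using info_set(1) by blast
  ultimately show ?thesis by simp
qed

lemma exists_good_outside_J_m:
  assumes q: "card Mstar_sets < card (UNIV::'a::{field,finite} set)"
  shows "\<exists>g :: nat \<Rightarrow> nat \<Rightarrow> 'a. good (heads \<union> ({1..n} - J m)) g"
proof -
  have m: "m \<in> {1..m}" using m_ge_2 by simp
  obtain g1 :: "nat \<Rightarrow> nat \<Rightarrow> 'a" where g1: "good heads g1" using exists_good_heads[OF q] by blast
  have "\<exists>g :: nat \<Rightarrow> nat \<Rightarrow> 'a. good (heads \<union> ({1..n} - J m - heads)) g"
  proof (rule good_extend_set[OF q _ g1])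
    fix c Q assume c: "c \<in> {1..n} - J m - heads" and Q: "Q \<subseteq> {1..n} - J m - heads" "c \<notin> Q"
    obtain i where i: "i \<in> {1..m}" "c \<in> J i" using c exists_block by blast
    have "heads \<union> Q \<subseteq> {1..n} - {c, n}" using c Q heads_subset n_notin_heads n_in_Jm by blast
    moreover have "head i \<subseteq> heads \<union> Q" using heads_Int_J[OF i(1)] by blast
    moreover have "(heads \<union> Q) \<inter> J m \<subseteq> head m" using Q(1) heads_Int_J[OF m] by blast
    ultimately show "\<exists>i. placeable i c (heads \<union> Q)" using placeableI[OF i _ disjI1 disjI2] by blast
  qed simp
  moreover have "heads \<union> ({1..n} - J m - heads) = heads \<union> ({1..n} - J m)" by blast
  ultimately show ?thesis by simp
qed

lemma exists_good_all_but_n: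
  assumes q: "card Mstar_sets < card (UNIV::'a::{field,finite} set)"
  shows "\<exists>g :: nat \<Rightarrow> nat \<Rightarrow> 'a. good ({1..n} - {n}) g"
proof -
  have m: "m \<in> {1..m}" using m_ge_2 by simp
  define P where "P = heads \<union> ({1..n} - J m)"
  obtain g2 :: "nat \<Rightarrow> nat \<Rightarrow> 'a" where g2: "good P g2"
    using exists_good_outside_J_m[OF q] unfolding P_def by blast
  have "\<exists>g :: nat \<Rightarrow> nat \<Rightarrow> 'a. good (P \<union> (J m - head m - {n})) g"
  proof (rule good_extend_set[OF q _ g2])
    fix c Q assume c: "c \<in> J m - head m - {n}" and Q: "Q \<subseteq> J m - head m - {n}" "c \<notin> Q"
    have "c \<notin> P" using c heads_Int_J[OF m] unfolding P_def by blast
    moreover have "n \<notin> P" using n_notin_heads n_in_Jm unfolding P_def by blast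
    moreover have "P \<subseteq> {1..n}" using heads_subset unfolding P_def by blast
    ultimately have "P \<union> Q \<subseteq> {1..n} - {c, n}" using c Q J_subset[OF m] by blast
    moreover have "head m \<subseteq> P \<union> Q" using heads_Int_J[OF m] unfolding P_def by blast
    moreover have "c \<in> J m" using c by blast
    ultimately show "\<exists>i. placeable i c (P \<union> Q)"
      using placeableI[OF m _ _ disjI1 disjI1[OF refl]] by blast
  qed simp
  moreover have "P \<union> (J m - head m - {n}) = {1..n} - {n}"
  proof
    show "P \<union> (J m - head m - {n}) \<subseteq> {1..n} - {n}"
      using heads_subset n_notin_heads n_in_Jm J_subset[OF m] unfolding P_def by blast
    have "head m \<subseteq> heads" using heads_Int_J[OF m] by blast
    then show "{1..n} - {n} \<subseteq> P \<union> (J m - head m - {n})" unfolding P_def by blast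
  qed
  ultimately show ?thesis by simp
qed

lemma exists_good_all:
  assumes q: "card Mstar_sets < card (UNIV::'a::{field,finite} set)"
  shows "\<exists>g :: nat \<Rightarrow> nat \<Rightarrow> 'a. good {1..n} g"
proof -
  have m: "m \<in> {1..m}" using m_ge_2 by simp
  obtain g3 :: "nat \<Rightarrow> nat \<Rightarrow> 'a" where g3: "good ({1..n} - {n}) g3"
    using exists_good_all_but_n[OF q] by blast
  have "\<exists>g :: nat \<Rightarrow> nat \<Rightarrow> 'a. good (({1..n} - {n}) \<union> {n}) g"
  proof (rule good_extend_set[OF q _ g3])
    fix c Q assume "c \<in> {n}" "Q \<subseteq> {n}" "c \<notin> Q"
    then have "c = n" "Q = {}" by auto
    have "head m \<subseteq> J m" using head_subset_J m by simp
    then have "head m \<subseteq> {1..n} - {n}" using n_notin_head[OF m] J_subset[OF m] by auto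
    then have "placeable m n ({1..n} - {n})" by (intro placeableI[OF m n_in_Jm] disjI1) auto
    then show "\<exists>i. placeable i c ({1..n} - {n} \<union> Q)" using \<open>c = n\<close> \<open>Q = {}\<close> by auto
  qed simp
  moreover have "({1..n} - {n}) \<union> {n} = {1..n}" using n_pos by auto
  ultimately show ?thesis by simp
qed

definition dot :: "(nat \<Rightarrow> 'a::field) \<Rightarrow> (nat \<Rightarrow> 'a) \<Rightarrow> 'a" where
  "dot u v = (\<Sum>i<k. u i * v i)"

definition enc :: "(nat \<Rightarrow> nat \<Rightarrow> 'a::field) \<Rightarrow> nat set \<Rightarrow> (nat \<Rightarrow> 'a) \<Rightarrow> (nat \<Rightarrow> 'a)" where
  "enc g X u = (\<lambda>j. if j \<in> X then dot u (g j) else 0)"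

lemma dot_add_left: "dot (u + u') v = dot u v + dot u' v"
  unfolding dot_def by (simp add: distrib_right sum.distrib)

lemma dot_scale_left: "dot (sc a u) v = a * dot u v"
  unfolding dot_def by (simp add: sc_apply sum_distrib_left mult.assoc)

lemma dot_diff_left: "dot (u - u') v = dot u v - dot u' v"
  unfolding dot_def by (simp add: left_diff_distrib sum_subtractf)

lemma dot_add_right: "dot u (v + v') = dot u v + dot u v'"
  unfolding dot_def by (simp add: distrib_left sum.distrib)

lemma dot_scale_right: "dot u (sc a v) = a * dot u v"
  unfolding dot_def by (simp add: sc_apply sum_distrib_left mult.left_commute)

lemma dot_unit_vec: "t < k \<Longrightarrow> dot u (unit_vec t) = u t"
proof -
  assume t: "t < k"
  have "dot u (unit_vec t) = (\<Sum>i<k. if i = t then u i else 0)"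
    unfolding dot_def by (rule sum.cong) (auto simp: unit_vec_def)
  also have "\<dots> = u t" using t by simp
  finally show ?thesis .
qed

lemma dot_zero_right: "dot u 0 = 0" by (simp add: dot_def)

lemma subspace_dot_eq_0: "V.subspace {v. dot (u :: nat \<Rightarrow> 'a::field) v = 0}"
  unfolding V.subspace_def by (auto simp: dot_add_right dot_scale_right dot_zero_right)

lemma enc_add: "enc g X (u + u') = enc g X u + enc g X u'"
  unfolding enc_def by (auto simp: fun_eq_iff dot_add_left)
lemma enc_sc: "enc g X (sc a u) = sc a (enc g X u)"
  unfolding enc_def by (auto simp: fun_eq_iff dot_scale_left sc_apply)

lemma subspace_range_enc: "V.subspace (range (enc g X))"
proof (rule V.subspaceI)
  have "enc g X 0 = 0" unfolding enc_def dot_def by (auto simp: fun_eq_iff)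
  then show "0 \<in> range (enc g X)" by (metis rangeI)
  fix x y assume "x \<in> range (enc g X)" "y \<in> range (enc g X)"
  then obtain u u' where "x = enc g X u" "y = enc g X u'" by auto
  then show "x + y \<in> range (enc g X)" using enc_add by (metis rangeI)
next
  fix a x assume "x \<in> range (enc g X)"
  then obtain u where "x = enc g X u" by auto
  then show "sc a x \<in> range (enc g X)" using enc_sc by (metis rangeI)
qed

lemma range_enc_subset: "range (enc g X) \<subseteq> vecs_on X"
  unfolding enc_def vecs_on_def by auto

lemma restr_enc: "Z \<subseteq> S \<Longrightarrow> restr Z (enc g S u) = enc g Z u"
  unfolding restr_def enc_def by (auto simp: fun_eq_iff)

lemma enc_restr_lessThan: "enc g X (restr {..<k} u) = enc g X u"
  unfolding enc_def dot_def restr_def by (auto intro!: sum.cong)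

lemma range_enc_eq_image: "range (enc g X) = enc g X ` vecs_on {..<k}"
proof
  show "range (enc g X) \<subseteq> enc g X ` vecs_on {..<k}"
  proof
    fix x assume "x \<in> range (enc g X)"
    then obtain u where "x = enc g X u" by auto
    moreover have "restr {..<k} u \<in> vecs_on {..<k}" unfolding restr_def vecs_on_def by simp
    ultimately show "x \<in> enc g X ` vecs_on {..<k}" using enc_restr_lessThan by (metis image_eqI)
  qed
qed auto

lemma dot_eq_on_span_if_enc_eq:
  assumes eq: "enc g X u = enc g X u'" and v: "v \<in> V.span (g ` X)"
  shows "dot u v = dot u' v"
proof -
  have "g ` X \<subseteq> {v. dot (u - u') v = 0}"
    using eq by (auto simp: fun_eq_iff enc_def dot_diff_left split: if_splits)
  then have "V.span (g ` X) \<subseteq> {v. dot (u - u') v = 0}" by (rule V.span_minimal[OF _ subspace_dot_eq_0])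
  then show ?thesis using v by (auto simp: dot_diff_left)
qed

lemma admissible_if_card_le: "Z \<subseteq> {1..n} \<Longrightarrow> card Z \<le> l \<Longrightarrow> admissible (\<lambda>_. l) Z"
  unfolding admissible_def using finite_subset[of Z "{1..n}"] by (auto intro: le_trans[OF card_mono])

context
  fixes g :: "nat \<Rightarrow> nat \<Rightarrow> 'a::{field,finite}"
  assumes good: "good {1..n} g"
begin

lemma span_cols_eq_vecs_on:
  assumes X: "admissible (\<lambda>_. l) X" "card X = k"
  shows "V.span (g ` X) = vecs_on {..<k}"
proof -
  have X_n: "X \<subseteq> {1..n}" using X unfolding admissible_def by blast
  have fin: "finite X" using admissible_finite[OF X(1)] .
  have ind: "indep_cols g X" using goodD(3)[OF good X_n X(1)] X(2) by simp
  have "V.span (g ` X) \<subseteq> vecs_on {..<k}"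
    using goodD(2)[OF good] X_n by (intro V.span_minimal[OF _ subspace_vecs_on]) auto
  moreover have "card (g ` X) = k" using ind X(2) card_image unfolding indep_cols_def by metis
  then have "card (V.span (g ` X)) = card (vecs_on {..<k} :: (nat \<Rightarrow> 'a) set)"
    using card_span[of "g ` X"] ind fin unfolding indep_cols_def by (simp add: card_vecs_on)
  ultimately show ?thesis using card_subset_eq[OF finite_vecs_on] by blast
qed

lemma inj_on_enc:
  assumes X: "admissible (\<lambda>_. l) X" "card X = k"
  shows "inj_on (enc g X) (vecs_on {..<k})"
proof (rule inj_onI)
  fix u u' :: "nat \<Rightarrow> 'a"
  assume u: "u \<in> vecs_on {..<k}" "u' \<in> vecs_on {..<k}" and eq: "enc g X u = enc g X u'"
  have "u t = u' t" for t
  proof (cases "t < k")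
    case True
    have "unit_vec t \<in> V.span (g ` X)"
      using span_cols_eq_vecs_on[OF X] True by (auto simp: vecs_on_def unit_vec_def)
    then show ?thesis using dot_eq_on_span_if_enc_eq[OF eq] dot_unit_vec[OF True] by metis
  next
    case False then show ?thesis using u unfolding vecs_on_def by auto
  qed
  then show "u = u'" by auto
qed

lemma range_enc_eq_vecs_on:
  assumes Z: "admissible (\<lambda>_. l) Z" "card Z \<le> k"
  shows "range (enc g Z) = vecs_on Z"
proof
  show "range (enc g Z) \<subseteq> vecs_on Z" by (rule range_enc_subset)
  obtain X where X: "Z \<subseteq> X" "admissible (\<lambda>_. l) X" "card X = k"
    using admissible_augment[OF Z(1) admissible_info_set] Z(2) info_set(2) by auto
  have fin: "finite X" using admissible_finite[OF X(2)] .
  have "card (enc g X ` vecs_on {..<k}) = card (vecs_on X :: (nat \<Rightarrow> 'a) set)"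
    using card_image[OF inj_on_enc[OF X(2,3)]] X(3) fin by (simp add: card_vecs_on)
  moreover have "enc g X ` vecs_on {..<k} \<subseteq> vecs_on X" using range_enc_subset by blast
  ultimately have onto: "enc g X ` vecs_on {..<k} = vecs_on X"
    using card_subset_eq[OF finite_vecs_on[OF fin]] by blast
  show "vecs_on Z \<subseteq> range (enc g Z)"
  proof
    fix v :: "nat \<Rightarrow> 'a" assume v: "v \<in> vecs_on Z"
    then have "v \<in> vecs_on X" using X(1) unfolding vecs_on_def by blast
    then obtain u where "enc g X u = v" using onto by (metis imageE)
    then have "enc g Z u = restr Z v" using restr_enc[OF X(1), of g u] by simp
    also have "restr Z v = v" using v unfolding restr_def vecs_on_def by (auto simp: fun_eq_iff)
    finally show "v \<in> range (enc g Z)" by (metis rangeI)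
  qed
qed

lemma card_range_enc:
  assumes X: "X \<subseteq> S" "admissible (\<lambda>_. l) X" "card X = k"
  shows "card (range (enc g S)) = card (UNIV::'a set) ^ k"
proof -
  have "inj_on (enc g S) (vecs_on {..<k})"
  proof (rule inj_onI)
    fix u u' assume u: "u \<in> vecs_on {..<k}" "u' \<in> vecs_on {..<k}" and eq: "enc g S u = enc g S u'"
    have "enc g X u = enc g X u'" using restr_enc[OF X(1), of g] eq by metis
    then show "u = u'" using inj_onD[OF inj_on_enc[OF X(2,3)] _ u] by simp
  qed
  then show ?thesis unfolding range_enc_eq_image by (simp add: card_image card_vecs_on)
qed

(* Within a block every column lies in the span of the head columns, so a codeword of the
   block code is determined by its head coordinates. *)
lemma card_range_enc_J:
  assumes i: "i \<in> {1..m}"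
  shows "card (range (enc g (J i))) = card (UNIV::'a set) ^ l"
proof -
  have head_J: "head i \<subseteq> J i" using head_subset_J i by simp
  have head: "admissible (\<lambda>_. l) (head i)"
    using admissible_if_card_le head_J J_subset[OF i] card_head by simp
  have "restr (head i) ` range (enc g (J i)) = range (enc g (head i))"
    using restr_enc[OF head_J, of g] by (auto simp: image_iff)
  also have "\<dots> = vecs_on (head i)" using range_enc_eq_vecs_on[OF head] card_head l_le_k by simp
  finally have onto: "restr (head i) ` range (enc g (J i)) = vecs_on (head i)" .
  have "inj_on (restr (head i)) (range (enc g (J i)))"
  proof (rule inj_onI)
    fix x y assume "x \<in> range (enc g (J i))" "y \<in> range (enc g (J i))"
      and eq: "restr (head i) x = restr (head i) y"
    then obtain u u' where xy: "x = enc g (J i) u" "y = enc g (J i) u'" by auto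
    have eq_head: "enc g (head i) u = enc g (head i) u'" using eq xy restr_enc[OF head_J] by metis
    have "dot u (g j) = dot u' (g j)" if "j \<in> J i" for j
    proof -
      have "g j \<in> V.span (g ` head i)"
        using goodD(4)[OF good i, of j] that J_subset[OF i] by (cases "j \<in> head i") (auto intro: V.span_base)
      then show ?thesis using dot_eq_on_span_if_enc_eq[OF eq_head] by blast
    qed
    then show "x = y" unfolding xy enc_def by (auto simp: fun_eq_iff)
  qed
  then show ?thesis using card_image onto by (metis card_head card_vecs_on finite_head)
qed

lemma restr_code_enc:
  assumes "T \<subseteq> {1..n}"
  shows "restr_code T (range (enc g {1..n})) = range (enc g T)"
proof -
  have "restr_code T (range (enc g {1..n})) = restr T ` range (enc g {1..n})"
    unfolding restr_code_def restr_def ..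
  also have "\<dots> = range (enc g T)" using restr_enc[OF assms, of g] by (auto simp: image_iff)
  finally show ?thesis .
qed

lemma is_MDS_restr_code:
  assumes T: "T \<subseteq> {1..n}" and d: "1 \<le> d" "d \<le> card T" "d \<le> k"
    and card: "card (range (enc g T)) = card (UNIV::'a set) ^ d"
    and adm: "\<And>Z. Z \<subseteq> T \<Longrightarrow> card Z = d \<Longrightarrow> admissible (\<lambda>_. l) Z"
  shows "is_MDS T d (restr_code T (range (enc g {1..n})))"
  unfolding restr_code_enc[OF T]
proof (rule is_MDS_if_restr_onto[OF _ range_enc_subset subspace_range_enc card d(1,2)])
  show "finite T" using T finite_subset by blast
  fix Z assume Z: "Z \<subseteq> T" "card Z = d"
  have "restr Z ` range (enc g T) = range (enc g Z)" using restr_enc[OF Z(1), of g] by (auto simp: image_iff)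
  also have "\<dots> = vecs_on Z" using range_enc_eq_vecs_on[OF adm[OF Z]] Z(2) d(3) by simp
  finally show "restr Z ` range (enc g T) = vecs_on Z" .
qed

lemma is_MDS_block_code:
  assumes i: "i \<in> {1..m}"
  shows "is_MDS (J i) l (restr_code (J i) (range (enc g {1..n})))"
proof (rule is_MDS_restr_code[OF J_subset[OF i] l_pos _ l_le_k card_range_enc_J[OF i]])
  show "l \<le> card (J i)" using card_J[of i] i by (simp add: ns_def)
  show "admissible (\<lambda>_. l) Z" if "Z \<subseteq> J i" "card Z = l" for Z
    using admissible_if_card_le that J_subset[OF i] by auto
qed

lemma is_MDS_punctured_code:
  assumes E: "E \<subseteq> {1..n}" "\<forall>i\<in>{1..m}. card (E \<inter> J i) = r i"
  shows "is_MDS ({1..n} - E) k (restr_code ({1..n} - E) (range (enc g {1..n})))"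
proof -
  define S where "S = {1..n} - E"
  have S_n: "S \<subseteq> {1..n}" unfolding S_def by blast
  have "card (S \<inter> J i) = l" if i: "i \<in> {1..m}" for i
  proof -
    have "S \<inter> J i = J i - (E \<inter> J i)" unfolding S_def using J_subset[OF i] by blast
    then show ?thesis using card_J[of i] i E(2) by (simp add: card_Diff_subset ns_def)
  qed
  then have adm: "admissible (\<lambda>_. l) S" and card_S: "card S = m * l"
    using S_n card_eq_sum_blocks[OF S_n] unfolding admissible_def by simp_all
  obtain X where X: "X \<subseteq> S" "card X = k" using card_S k_less_ml obtain_subset_with_card_n
    by (metis less_imp_le_nat)
  have "is_MDS S k (restr_code S (range (enc g {1..n})))"
  proof (rule is_MDS_restr_code[OF S_n _ _ order_refl card_range_enc[OF X(1) admissible_subset[OF adm X(1)] X(2)]])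
    show "1 \<le> k" "k \<le> card S" using card_S k_less_ml l_le_k l_pos by simp_all
    show "admissible (\<lambda>_. l) Z" if "Z \<subseteq> S" "card Z = k" for Z using admissible_subset[OF adm that(1)] .
  qed
  then show ?thesis unfolding S_def .
qed

lemma is_PMDS_gen_transposed: "is_PMDS_gen m l r k (\<lambda>i j. g j i)"
proof -
  have n: "(\<Sum>i\<in>{1..m}. r i + l) = n" unfolding n_def ns_def by simp
  have blk: "blk (\<lambda>i. r i + l) i = J i" for i unfolding J_def ns_def[abs_def] ..
  have code: "gen_code n k (\<lambda>i j. g j i) = range (enc g {1..n})"
    unfolding gen_code_def enc_def dot_def by (simp add: full_SetCompr_eq)
  have info: "info_set \<subseteq> {1..n}" using info_set(1) heads_subset by blast
  have "finite (range (enc g {1..n}))"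
    using finite_subset[OF range_enc_subset finite_vecs_on[of "{1..n}"]] by simp
  then have dim: "code_dim (range (enc g {1..n})) = k"
    unfolding code_dim_def
    by (rule dim_eq_if_card[OF subspace_range_enc _ card_range_enc[OF info admissible_info_set info_set(2)]])
  show ?thesis unfolding is_PMDS_gen_def Let_def n blk code
  proof (intro conjI allI impI ballI)
    show "k < n" using k_less_ml ml_le_n by simp
    show "code_dim (range (enc g {1..n})) = k" by (fact dim)
  qed (use is_MDS_block_code is_MDS_punctured_code in blast)+
qed

end

end

theorem corollary24:
  fixes m l k :: nat and r :: "nat \<Rightarrow> nat"
  assumes "m \<ge> 2" and "l \<ge> 1" and "\<forall>i\<in>{1..m}. r i \<ge> 1"
    and "l \<le> k" and "k < m * l"
    and "card (UNIV :: 'a set) >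
           M (k - 1) m (\<lambda>i. if i = m then l + r i - 1 else l + r i)
                       (\<lambda>i. if i = m then l - 1 else l)"
  shows "\<exists>G :: nat \<Rightarrow> nat \<Rightarrow> 'a::{field,finite}. is_PMDS_gen m l r k G"
proof -
  interpret pmds_params m l k r using assms(1-5) by unfold_locales
  have "card Mstar_sets < card (UNIV :: 'a set)"
    using assms(6) M_star_eq_card_Mstar_sets unfolding ns_star_def by simp
  then obtain g :: "nat \<Rightarrow> nat \<Rightarrow> 'a" where "good {1..n} g" using exists_good_all by blast
  then show ?thesis using is_PMDS_gen_transposed by blast
qed

end
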